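(* Suppose that for some $\delta\ge 0$, \[\log\left(\frac{P_j(x_j\mid x_{-j})\,Q_j(x'_j\mid x_{-j})}{Q_j(x_j\mid x_{-j})\,P_j(x'_j\mid x_{-j})}\right)\le\delta\] holds for all $j=1,\dots,p$, all $x_j,x'_j$ and all $x_{-j}$. Then with probability at least $1-\frac1p$, \[\max_{j=1,\dots,p}\widehat{\mathrm{KL}}_j\le \frac{n\delta^2}{2}+2\sqrt{n\log(p)}\,\delta.\]
   Context: Setting: $X\in\mathbb{R}^p$ has distribution $P_X$; for $x\in\mathbb{R}^p$, $x_{-j}$ is $x$ with coordinate $j$ removed. Each $X_j$ is discrete or continuous, $P_j(\cdot\mid x_{-j})$ is the true conditional pmf/density of $X_j$ given $X_{-j}=x_{-j}$, and $Q_j(\cdot\mid x_{-j})$ is a fixed estimated conditional pmf/density of the same type and same support. A knockoff mechanism $P_{\tilde X\mid X}(\cdot\mid x)$ (a conditional distribution on $\mathbb{R}^p$) is pairwise exchangeable with respect to $Q_j$ if for every distribution $D^{(j)}$ on $\mathbb{R}^p$ with conditional of $X_j$ given $X_{-j}$ equal to $Q_j$, drawing $X\sim D^{(j)}$, $\tilde X\mid X\sim P_{\tilde X\mid X}(\cdot\mid X)$ yields $(X_j,\tilde X_j,X_{-j},\tilde X_{-j})\overset{d}{=}(\tilde X_j,X_j,X_{-j},\tilde X_{-j})$; standing assumption: this holds for every $j=1,\dots,p$. Data: $\mathbf X\in\mathbb{R}^{n\times p}$ with i.i.d. rows $\mathbf X_{i,*}\sim P_X$, and $\tilde{\mathbf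 X}$ with rows drawn independently as $\tilde{\mathbf X}_{i,*}\sim P_{\tilde X\mid X}(\cdot\mid\mathbf X_{i,*})$. Define \[\widehat{\mathrm{KL}}_j=\sum_{i=1}^n\log\left(\frac{P_j(\mathbf X_{ij}\mid \mathbf X_{i,-j})\,Q_j(\tilde{\mathbf X}_{ij}\mid \mathbf X_{i,-j})}{Q_j(\mathbf X_{ij}\mid \mathbf X_{i,-j})\,P_j(\tilde{\mathbf X}_{ij}\mid \mathbf X_{i,-j})}\right).\] *)

theory Defs
  imports "HOL-Probability.Probability"
begin

text \<open>Coordinate update: the vector x with its j-th coordinate replaced by t.
  A function of x that is invariant under such updates at coordinate j is
  exactly a function of x_{-j}.\<close>
definition setc :: "real^'p \<Rightarrow> 'p \<Rightarrow> real \<Rightarrow> real^'p" where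
  "setc x j t = (\<chi> i. if i = j then t else x $ i)"

text \<open>Reference measure of a coordinate: counting measure (discrete, pmf) or
  Lebesgue measure (continuous, density).\<close>
definition ref_measure :: "real measure \<Rightarrow> bool" where
  "ref_measure \<mu> \<longleftrightarrow> \<mu> = count_space UNIV \<or> \<mu> = lborel"

definition is_cond_density :: "'p \<Rightarrow> real measure \<Rightarrow> (real \<Rightarrow> real^'p \<Rightarrow> real) \<Rightarrow> bool" where
  "is_cond_density j \<mu> f \<longleftrightarrow>
     (\<lambda>(t, x). f t x) \<in> borel_measurable (borel \<Otimes>\<^sub>M borel) \<and>
     (\<forall>t x s. f t (setc x j s) = f t x) \<and>
     (\<forall>t x. 0 \<le> f t x) \<and>
     (\<forall>x. (\<integral>\<^sup>+ t. ennreal (f t x) \<partial>\<mu>) = 1)"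

text \<open>The conditional distribution of X_j given X_{-j} under the distribution D
  on R^p has pmf/density f (w.r.t. mu): D is obtained by drawing X from D and
  then redrawing coordinate j from f(. | X_{-j}).\<close>
definition has_cond_density :: "(real^'p) measure \<Rightarrow> 'p \<Rightarrow> real measure \<Rightarrow> (real \<Rightarrow> real^'p \<Rightarrow> real) \<Rightarrow> bool" where
  "has_cond_density D j \<mu> f \<longleftrightarrow>
     is_cond_density j \<mu> f \<and>
     (\<forall>A \<in> sets borel. emeasure D A =
        (\<integral>\<^sup>+ x. (\<integral>\<^sup>+ t. ennreal (f t x) * indicator A (setc x j t) \<partial>\<mu>) \<partial>D))"

definition joint :: "(real^'p) measure \<Rightarrow> (real^'p \<Rightarrow> (real^'p) measure) \<Rightarrow> ((real^'p) \<times> (real^'p)) measure" where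
  "joint D K = bind D (\<lambda>x. bind (K x) (\<lambda>y. return (borel \<Otimes>\<^sub>M borel) (x, y)))"

definition swapj :: "'p \<Rightarrow> (real^'p) \<times> (real^'p) \<Rightarrow> (real^'p) \<times> (real^'p)" where
  "swapj j xy = (setc (fst xy) j (snd xy $ j), setc (snd xy) j (fst xy $ j))"

definition pairwise_exch :: "(real^'p \<Rightarrow> (real^'p) measure) \<Rightarrow> 'p \<Rightarrow> real measure \<Rightarrow> (real \<Rightarrow> real^'p \<Rightarrow> real) \<Rightarrow> bool" where
  "pairwise_exch K j \<mu> Qj \<longleftrightarrow>
     (\<forall>D. prob_space D \<and> sets D = sets borel \<and> has_cond_density D j \<mu> Qj \<longrightarrow>
        distr (joint D K) (borel \<Otimes>\<^sub>M borel) (swapj j) = joint D K)"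

text \<open>The statistic KLhat_j of the data; omega i = (row i of X, row i of Xtilde).\<close>
definition KLhat :: "nat \<Rightarrow> 'p \<Rightarrow> (real \<Rightarrow> real^'p \<Rightarrow> real) \<Rightarrow> (real \<Rightarrow> real^'p \<Rightarrow> real) \<Rightarrow>
     (nat \<Rightarrow> (real^'p) \<times> (real^'p)) \<Rightarrow> real" where
  "KLhat n j Pj Qj \<omega> = (\<Sum>i<n. ln ((Pj (fst (\<omega> i) $ j) (fst (\<omega> i)) * Qj (snd (\<omega> i) $ j) (fst (\<omega> i))) /
                                 (Qj (fst (\<omega> i) $ j) (fst (\<omega> i)) * Pj (snd (\<omega> i) $ j) (fst (\<omega> i)))))"

end

theory Submission
  imports Defs
begin

(* Tilting P_X by w(x) = Q_j(x_j | x_{-j}) / P_j(x_j | x_{-j}) yields a law whose conditional of X_j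
   given X_{-j} is Q_j, so by pairwise exchangeability the joint law J of (X, Xtilde) under the
   tilted law is invariant under swapping the j-th coordinates of X and Xtilde. With a = 1/w(X),
   a summand of KLhat_j is h = ln (a / a o swap), hence
     E[h] = E_J[a h] = - E_J[(a o swap) h],  so  2 E[h] = E_J[(a - a o swap) ln (a / a o swap)],
   and the elementary bound (a - b) ln (a / b) <= (a + b) delta^2 / 2 for |ln (a / b)| <= delta
   gives E[h] <= delta^2 / 2. Since |h| <= delta, Hoeffding's inequality bounds the probability
   that KLhat_j exceeds n delta^2 / 2 + 2 sqrt (n ln p) delta by 1 / p^2, and a union bound over
   the p coordinates concludes. *)

lemma setc_setc [simp]: "setc (setc x j s) j t = setc x j t"
  by (simp add: setc_def vec_eq_iff)

lemma setc_nth_same [simp]: "setc x j t $ j = t"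
  by (simp add: setc_def)

lemma setc_nth_self [simp]: "setc x j (x $ j) = x"
  by (simp add: setc_def vec_eq_iff)

lemma swapj_swapj [simp]: "swapj j (swapj j z) = z"
  by (simp add: swapj_def)

lemma measurable_vec_nth [measurable (raw)]:
  "f \<in> M \<rightarrow>\<^sub>M (borel :: (real^'p) measure) \<Longrightarrow> (\<lambda>x. f x $ i) \<in> borel_measurable M"
  using measurable_compose[OF _ borel_measurable_nth] .

lemma continuous_on_setc: "continuous_on UNIV (\<lambda>z::(real^'p) \<times> real. setc (fst z) j (snd z))"
  unfolding setc_def
  by (rule continuous_on_vec_lambda, rename_tac i, case_tac "i = j") (auto intro!: continuous_intros)

lemma measurable_setc:
  assumes "f \<in> M \<rightarrow>\<^sub>M borel" and "g \<in> borel_measurable M"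
  shows "(\<lambda>w. setc (f w) j (g w :: real)) \<in> M \<rightarrow>\<^sub>M (borel :: (real^'p) measure)"
  using measurable_compose[OF borel_measurable_Pair[OF assms]
      borel_measurable_continuous_onI[OF continuous_on_setc]] by simp

lemma measurable_swapj [measurable]:
  "swapj j \<in> (borel :: (real^'p) measure) \<Otimes>\<^sub>M (borel :: (real^'p) measure) \<rightarrow>\<^sub>M borel \<Otimes>\<^sub>M borel"
proof -
  have "(\<lambda>z. setc (fst z) j (snd z $ j)) \<in> (borel :: (real^'p) measure) \<Otimes>\<^sub>M borel \<rightarrow>\<^sub>M borel"
    "(\<lambda>z. setc (snd z) j (fst z $ j)) \<in> (borel :: (real^'p) measure) \<Otimes>\<^sub>M borel \<rightarrow>\<^sub>M borel"
    by (rule measurable_setc; measurable)+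
  then show ?thesis unfolding swapj_def by (intro measurable_Pair)
qed

lemma measurable_ref_measure:
  "ref_measure \<mu> \<Longrightarrow> f \<in> borel_measurable borel \<Longrightarrow> f \<in> borel_measurable \<mu>"
  unfolding ref_measure_def by (auto simp: measurable_cong_sets[OF _ refl, of lborel borel])

lemma is_cond_density_nonneg: "is_cond_density j \<mu> f \<Longrightarrow> 0 \<le> f t x"
  unfolding is_cond_density_def by blast

lemma is_cond_density_setc: "is_cond_density j \<mu> f \<Longrightarrow> f t (setc x j s) = f t x"
  unfolding is_cond_density_def by blast

lemma is_cond_density_nn_integral: "is_cond_density j \<mu> f \<Longrightarrow> (\<integral>\<^sup>+ t. ennreal (f t x) \<partial>\<mu>) = 1"
  unfolding is_cond_density_def by blast

lemma has_cond_density_is_cond_density: "has_cond_density M j \<mu> f \<Longrightarrow> is_cond_density j \<mu> f"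
  unfolding has_cond_density_def by blast

lemma measurable_cond_density:
  fixes f :: "real \<Rightarrow> real^'p \<Rightarrow> real"
  assumes "is_cond_density j \<mu> f" and "g \<in> borel_measurable M" and "y \<in> M \<rightarrow>\<^sub>M borel"
  shows "(\<lambda>z. f (g z) (y z)) \<in> borel_measurable M"
proof -
  have "(\<lambda>(t, x). f t x) \<in> borel_measurable (borel \<Otimes>\<^sub>M borel)"
    using assms(1) unfolding is_cond_density_def by blast
  from measurable_compose[OF measurable_Pair[OF assms(2,3)] this] show ?thesis by simp
qed

lemma nn_integral_measurable_minorant:
  fixes u :: "'a \<Rightarrow> ennreal"
  obtains g where "g \<in> borel_measurable M" "\<And>x. g x \<le> u x" "integral\<^sup>N M g = integral\<^sup>N M u"
proof -
  let ?S = "{g. simple_function M g \<and> g \<le> u}"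
  have ne: "integral\<^sup>S M ` ?S \<noteq> {}"
    by (auto intro!: exI[of _ "\<lambda>_. 0"] simp: le_fun_def)
  obtain f where f: "incseq f" "range f \<subseteq> integral\<^sup>S M ` ?S" "Sup (integral\<^sup>S M ` ?S) = (SUP i. f i)"
    using ennreal_Sup_countable_SUP[OF ne] by blast
  have "\<forall>i. \<exists>G. simple_function M G \<and> G \<le> u \<and> f i = integral\<^sup>S M G"
    using f(2) by blast
  then obtain G where G: "\<And>i. simple_function M (G i)" "\<And>i. G i \<le> u" "\<And>i. f i = integral\<^sup>S M (G i)"
    by metis
  define g where "g x = (SUP i. G i x)" for x
  have g_le: "g x \<le> u x" for x
    unfolding g_def using G(2) by (auto intro!: SUP_least simp: le_fun_def)
  have "integral\<^sup>N M u = (SUP i. f i)" unfolding nn_integral_def using f(3) by simp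
  also have "\<dots> \<le> integral\<^sup>N M g"
  proof (rule SUP_least)
    fix i
    have "f i = integral\<^sup>N M (G i)" using G by (simp add: nn_integral_eq_simple_integral)
    also have "\<dots> \<le> integral\<^sup>N M g" by (intro nn_integral_mono) (auto simp: g_def intro: SUP_upper)
    finally show "f i \<le> integral\<^sup>N M g" .
  qed
  finally have "integral\<^sup>N M g = integral\<^sup>N M u"
    using g_le by (intro antisym[OF nn_integral_mono]) auto
  moreover have "g \<in> borel_measurable M"
    unfolding g_def using G(1) by (intro borel_measurable_SUP borel_measurable_simple_function) auto
  ultimately show ?thesis using g_le that by blast
qed

lemma ennreal_eq_if_le_add_eq:
  fixes a b c d :: ennreal
  assumes "a \<le> b" "c \<le> d" "a + c = b + d" "b + d \<noteq> top"
  shows "a = b"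
proof -
  have "d + b \<le> d + a" using assms by (metis add.commute add_left_mono)
  moreover have "d \<noteq> top" using assms(4) by auto
  ultimately have "b \<le> a" by (simp add: ennreal_add_left_cancel_le)
  then show ?thesis using assms(1) by simp
qed

lemma (in prob_space) AE_eq_1_if_nn_integral_eq_1:
  assumes "h \<in> borel_measurable M" "\<And>x. h x \<le> 1" "integral\<^sup>N M h = 1"
  shows "AE x in M. h x = 1"
proof -
  have "(\<integral>\<^sup>+x. 1 - h x \<partial>M) = (\<integral>\<^sup>+x. 1 \<partial>M) - integral\<^sup>N M h"
    using assms by (intro nn_integral_diff) auto
  also have "\<dots> = 0" using assms(3) by (simp add: emeasure_space_1)
  finally have "AE x in M. 1 - h x = 0"
    using assms by (subst nn_integral_0_iff_AE[symmetric]) auto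
  then show ?thesis
    by eventually_elim (metis assms(2) antisym diff_eq_0_iff_ennreal)
qed

text \<open>E[f | X_{-j} = x_{-j}] when X_j given X_{-j} has density p. For the counting measure this
  need not be measurable in x, so it is only ever compared a.e. with measurable functions.\<close>
definition cond_nn_integral ::
    "'p \<Rightarrow> real measure \<Rightarrow> (real \<Rightarrow> real^'p \<Rightarrow> real) \<Rightarrow> (real^'p \<Rightarrow> ennreal) \<Rightarrow> real^'p \<Rightarrow> ennreal" where
  "cond_nn_integral j \<mu> p f x = (\<integral>\<^sup>+t. ennreal (p t x) * f (setc x j t) \<partial>\<mu>)"

lemma measurable_cond_integrand:
  fixes f :: "real^'p \<Rightarrow> ennreal"
  assumes "ref_measure \<mu>" "is_cond_density j \<mu> p" "f \<in> borel_measurable borel"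
  shows "(\<lambda>t. ennreal (p t x) * f (setc x j t)) \<in> borel_measurable \<mu>"
proof -
  have [measurable]: "(\<lambda>t. p t x) \<in> borel_measurable borel"
    using measurable_cond_density[OF assms(2), of "\<lambda>t. t" borel "\<lambda>_. x"] by simp
  have [measurable]: "(\<lambda>t. setc x j t) \<in> borel \<rightarrow>\<^sub>M borel"
    using measurable_setc[of "\<lambda>_. x" borel "\<lambda>t. t"] by simp
  have [measurable]: "(\<lambda>t. f (setc x j t)) \<in> borel_measurable borel"
    using measurable_compose[OF _ assms(3)] by measurable
  show ?thesis by (intro measurable_ref_measure[OF assms(1)]) measurable
qed

lemma cond_nn_integral_setc:
  "is_cond_density j \<mu> p \<Longrightarrow> cond_nn_integral j \<mu> p f (setc x j s) = cond_nn_integral j \<mu> p f x"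
  unfolding cond_nn_integral_def by (simp add: is_cond_density_setc)

lemma cond_nn_integral_invariant:
  assumes "ref_measure \<mu>" "is_cond_density j \<mu> p" and g: "\<And>x s. g (setc x j s) = g x"
  shows "cond_nn_integral j \<mu> p g x = g x"
proof -
  have "cond_nn_integral j \<mu> p g x = (\<integral>\<^sup>+t. ennreal (p t x) \<partial>\<mu>) * g x"
    unfolding cond_nn_integral_def g
    using measurable_cond_integrand[OF assms(1,2), of "\<lambda>_. 1" x]
    by (intro nn_integral_multc) simp
  then show ?thesis using is_cond_density_nn_integral[OF assms(2)] by simp
qed

locale cond_law = prob_space M for M :: "(real^'p) measure" +
  fixes j :: 'p and \<mu> :: "real measure" and p :: "real \<Rightarrow> real^'p \<Rightarrow> real"
  assumes sets_M: "sets M = sets borel"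
    and ref: "ref_measure \<mu>"
    and has_cond: "has_cond_density M j \<mu> p"
begin

lemma cond_density: "is_cond_density j \<mu> p"
  using has_cond by (rule has_cond_density_is_cond_density)

lemma space_M: "space M = UNIV"
  using sets_eq_imp_space_eq[OF sets_M] by simp

lemma measurable_M_iff: "f \<in> M \<rightarrow>\<^sub>M N \<longleftrightarrow> f \<in> borel \<rightarrow>\<^sub>M N"
  by (simp add: measurable_cong_sets[OF sets_M refl])

lemma emeasure_eq_nn_integral_cond:
  "A \<in> sets borel \<Longrightarrow> emeasure M A = (\<integral>\<^sup>+x. cond_nn_integral j \<mu> p (indicator A) x \<partial>M)"
  using has_cond unfolding has_cond_density_def cond_nn_integral_def by blast

lemma cond_nn_integral_add:
  assumes "f \<in> borel_measurable borel" "g \<in> borel_measurable borel"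
  shows "cond_nn_integral j \<mu> p (\<lambda>x. f x + g x) x = cond_nn_integral j \<mu> p f x + cond_nn_integral j \<mu> p g x"
  unfolding cond_nn_integral_def
  by (subst nn_integral_add[symmetric])
     (auto intro!: nn_integral_cong measurable_cond_integrand[OF ref cond_density] assms simp: distrib_left)

lemma cond_nn_integral_cmult:
  assumes "f \<in> borel_measurable borel"
  shows "cond_nn_integral j \<mu> p (\<lambda>x. c * f x) x = c * cond_nn_integral j \<mu> p f x"
  unfolding cond_nn_integral_def
  by (subst nn_integral_cmult[symmetric])
     (auto intro!: nn_integral_cong measurable_cond_integrand[OF ref cond_density] assms simp: mult_ac)

lemma cond_nn_integral_SUP:
  assumes "\<And>i. U i \<in> borel_measurable borel" "incseq U"
  shows "cond_nn_integral j \<mu> p (SUP i. U i) x = (SUP i. cond_nn_integral j \<mu> p (U i) x)"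
proof -
  have "cond_nn_integral j \<mu> p (SUP i. U i) x = (\<integral>\<^sup>+t. (SUP i. ennreal (p t x) * U i (setc x j t)) \<partial>\<mu>)"
    unfolding cond_nn_integral_def by (simp add: SUP_mult_left_ennreal image_comp)
  also have "\<dots> = (SUP i. cond_nn_integral j \<mu> p (U i) x)"
    unfolding cond_nn_integral_def using assms(2)
    by (intro nn_integral_monotone_convergence_SUP measurable_cond_integrand[OF ref cond_density] assms(1))
       (auto simp: incseq_def le_fun_def intro!: mult_left_mono)
  finally show ?thesis .
qed

definition tower_property :: "(real^'p \<Rightarrow> ennreal) \<Rightarrow> bool" where
  "tower_property f \<longleftrightarrow> (\<exists>g \<in> borel_measurable borel.
     (AE x in M. cond_nn_integral j \<mu> p f x = g x) \<and> integral\<^sup>N M g = integral\<^sup>N M f)"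

text \<open>The defining property of p only gives E[E[1_A | X_{-j}]] = P(A) with the inner term possibly
  non-measurable. Measurable minorants of E[1_A | X_{-j}] and E[1_{-A} | X_{-j}] have total
  integral 1 while the two conditional terms sum to 1, so the minorants are a.e. exact.\<close>
lemma tower_property_indicator:
  assumes A: "A \<in> sets borel"
  shows "tower_property (indicator A)"
proof -
  let ?C = "cond_nn_integral j \<mu> p"
  have "-A \<in> sets borel" using A by auto
  have sum_1: "?C (indicator A) x + ?C (indicator (-A)) x = 1" for x
  proof -
    have "?C (indicator A) x + ?C (indicator (-A)) x = ?C (\<lambda>y. indicator A y + indicator (-A) y) x"
      using A \<open>-A \<in> sets borel\<close> by (intro cond_nn_integral_add[symmetric]) auto
    also have "\<dots> = (\<integral>\<^sup>+t. ennreal (p t x) \<partial>\<mu>)"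
      unfolding cond_nn_integral_def by (intro nn_integral_cong) (auto split: split_indicator)
    finally show ?thesis using is_cond_density_nn_integral[OF cond_density] by simp
  qed
  obtain g1 where g1: "g1 \<in> borel_measurable M" "\<And>x. g1 x \<le> ?C (indicator A) x"
      "integral\<^sup>N M g1 = emeasure M A"
    using nn_integral_measurable_minorant[of M "?C (indicator A)"] emeasure_eq_nn_integral_cond[OF A]
    by metis
  obtain g2 where g2: "g2 \<in> borel_measurable M" "\<And>x. g2 x \<le> ?C (indicator (-A)) x"
      "integral\<^sup>N M g2 = emeasure M (-A)"
    using nn_integral_measurable_minorant[of M "?C (indicator (-A))"]
      emeasure_eq_nn_integral_cond[OF \<open>-A \<in> sets borel\<close>] by metis
  have "emeasure M A + emeasure M (-A) = 1"
    using A sets_M prob_compl[of A] emeasure_eq_measure space_M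
    by (simp add: Compl_eq_Diff_UNIV ennreal_plus[symmetric] del: ennreal_plus)
  then have "integral\<^sup>N M (\<lambda>x. g1 x + g2 x) = 1"
    using g1 g2 by (simp add: nn_integral_add)
  moreover have "g1 x + g2 x \<le> 1" for x
    using add_mono[OF g1(2)[of x] g2(2)[of x]] sum_1[of x] by simp
  ultimately have "AE x in M. g1 x + g2 x = 1"
    using g1(1) g2(1) by (intro AE_eq_1_if_nn_integral_eq_1) auto
  then have "AE x in M. ?C (indicator A) x = g1 x"
    by eventually_elim (metis ennreal_eq_if_le_add_eq[OF g1(2) g2(2)] sum_1 ennreal_one_neq_top)
  then show ?thesis
    unfolding tower_property_def using g1 A sets_M by (intro bexI[of _ g1]) (auto simp: measurable_M_iff)
qed

lemma tower_property_cmult: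
  assumes "tower_property u" "u \<in> borel_measurable borel"
  shows "tower_property (\<lambda>x. c * u x)"
proof -
  obtain g where g: "g \<in> borel_measurable borel" "AE x in M. cond_nn_integral j \<mu> p u x = g x"
      "integral\<^sup>N M g = integral\<^sup>N M u"
    using assms(1) unfolding tower_property_def by blast
  have "AE x in M. cond_nn_integral j \<mu> p (\<lambda>x. c * u x) x = c * g x"
    using g(2) by eventually_elim (simp add: cond_nn_integral_cmult assms(2))
  moreover have "(\<integral>\<^sup>+ x. c * g x \<partial>M) = (\<integral>\<^sup>+ x. c * u x \<partial>M)"
    using g assms(2) by (simp add: nn_integral_cmult measurable_M_iff)
  ultimately show ?thesis
    unfolding tower_property_def using g(1) by (intro bexI[of _ "\<lambda>x. c * g x"]) auto
qed

lemma tower_property_add: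
  assumes "tower_property u" "u \<in> borel_measurable borel" "tower_property v" "v \<in> borel_measurable borel"
  shows "tower_property (\<lambda>x. u x + v x)"
proof -
  obtain g where g: "g \<in> borel_measurable borel" "AE x in M. cond_nn_integral j \<mu> p u x = g x"
      "integral\<^sup>N M g = integral\<^sup>N M u"
    using assms(1) unfolding tower_property_def by blast
  obtain h where h: "h \<in> borel_measurable borel" "AE x in M. cond_nn_integral j \<mu> p v x = h x"
      "integral\<^sup>N M h = integral\<^sup>N M v"
    using assms(3) unfolding tower_property_def by blast
  have "AE x in M. cond_nn_integral j \<mu> p (\<lambda>x. u x + v x) x = g x + h x"
    using g(2) h(2) by eventually_elim (simp add: cond_nn_integral_add assms(2,4))
  moreover have "(\<integral>\<^sup>+ x. g x + h x \<partial>M) = (\<integral>\<^sup>+ x. u x + v x \<partial>M)"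
    using g h assms(2,4) by (simp add: nn_integral_add measurable_M_iff)
  ultimately show ?thesis
    unfolding tower_property_def using g(1) h(1) by (intro bexI[of _ "\<lambda>x. g x + h x"]) auto
qed

lemma tower_property_SUP:
  assumes "\<And>i. tower_property (U i)" "\<And>i. U i \<in> borel_measurable borel" "incseq U"
  shows "tower_property (SUP i. U i)"
proof -
  obtain g where g: "\<And>i. g i \<in> borel_measurable borel"
      "\<And>i. AE x in M. cond_nn_integral j \<mu> p (U i) x = g i x" "\<And>i. integral\<^sup>N M (g i) = integral\<^sup>N M (U i)"
    using assms(1) unfolding tower_property_def by metis
  have ae: "AE x in M. \<forall>i. cond_nn_integral j \<mu> p (U i) x = g i x"
    using g(2) by (simp add: AE_all_countable)
  have mono: "cond_nn_integral j \<mu> p (U i) x \<le> cond_nn_integral j \<mu> p (U (Suc i)) x" for i x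
    unfolding cond_nn_integral_def using assms(3)
    by (intro nn_integral_mono mult_left_mono) (auto simp: incseq_def le_fun_def)
  have "AE x in M. cond_nn_integral j \<mu> p (SUP i. U i) x = (SUP i. g i x)"
    using ae by eventually_elim (simp add: cond_nn_integral_SUP[OF assms(2,3)])
  moreover have "(\<integral>\<^sup>+ x. (SUP i. g i x) \<partial>M) = integral\<^sup>N M (SUP i. U i)"
  proof -
    have "AE x in M. g i x \<le> g (Suc i) x" for i
      using ae by eventually_elim (metis mono)
    then have "(\<integral>\<^sup>+ x. (SUP i. g i x) \<partial>M) = (SUP i. integral\<^sup>N M (g i))"
      using g(1) by (intro nn_integral_monotone_convergence_SUP_AE) (auto simp: measurable_M_iff)
    also have "\<dots> = (\<integral>\<^sup>+ x. (SUP i. U i x) \<partial>M)"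
      using assms(2,3) g(3)
      by (simp add: nn_integral_monotone_convergence_SUP measurable_M_iff)
    also have "(\<lambda>x. SUP i. U i x) = (SUP i. U i)"
      by (simp add: fun_eq_iff image_comp)
    finally show ?thesis .
  qed
  ultimately show ?thesis
    unfolding tower_property_def using g(1) by (intro bexI[of _ "\<lambda>x. SUP i. g i x"]) auto
qed

lemma tower_property_borel: "f \<in> borel_measurable borel \<Longrightarrow> tower_property f"
proof (induct rule: borel_measurable_induct)
  case (cong f g)
  then show ?case by (simp add: fun_eq_iff)
next
  case (seq U)
  moreover have "(\<lambda>x. SUP f\<in>range U. f x) = (SUP i. U i)"
    by (simp add: fun_eq_iff image_comp)
  ultimately show ?case using tower_property_SUP[of U] by simp
qed (auto intro: tower_property_indicator tower_property_cmult tower_property_add)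

lemma nn_integral_eq_if_AE_cond:
  assumes "f \<in> borel_measurable borel" "g \<in> borel_measurable borel"
    and "AE x in M. cond_nn_integral j \<mu> p f x = g x"
  shows "integral\<^sup>N M f = integral\<^sup>N M g"
proof -
  obtain g' where g': "g' \<in> borel_measurable borel" "AE x in M. cond_nn_integral j \<mu> p f x = g' x"
      "integral\<^sup>N M g' = integral\<^sup>N M f"
    using tower_property_borel[OF assms(1)] unfolding tower_property_def by blast
  have "AE x in M. g' x = g x" using g'(2) assms(3) by eventually_elim simp
  then show ?thesis using g'(3) by (metis nn_integral_cong_AE)
qed

lemma cond_nn_integral_AE_cong:
  assumes "AE x in M. f x = g x"
  shows "AE x in M. cond_nn_integral j \<mu> p f x = cond_nn_integral j \<mu> p g x"
proof -
  obtain N where N: "{x \<in> space M. f x \<noteq> g x} \<subseteq> N" "N \<in> null_sets M"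
    using assms by (auto elim!: AE_E)
  have "N \<in> sets borel" using N(2) sets_M by auto
  obtain h where h: "h \<in> borel_measurable borel" "AE x in M. cond_nn_integral j \<mu> p (indicator N) x = h x"
      "integral\<^sup>N M h = 0"
    using tower_property_borel[of "indicator N"] N(2) \<open>N \<in> sets borel\<close>
    unfolding tower_property_def by (auto simp: sets_M)
  have "AE x in M. h x = 0"
    using h(1,3) by (subst (asm) nn_integral_0_iff_AE) (auto simp: measurable_M_iff)
  with h(2) show ?thesis
  proof eventually_elim
    case (elim x)
    then have "(\<integral>\<^sup>+t. ennreal (p t x) * indicator N (setc x j t) \<partial>\<mu>) = 0"
      unfolding cond_nn_integral_def by simp
    then have "AE t in \<mu>. ennreal (p t x) * indicator N (setc x j t) = 0"
      using \<open>N \<in> sets borel\<close>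
      by (subst (asm) nn_integral_0_iff_AE) (auto intro!: measurable_cond_integrand[OF ref cond_density])
    moreover have "y \<notin> N \<Longrightarrow> f y = g y" for y using N(1) space_M by auto
    ultimately have "AE t in \<mu>. ennreal (p t x) * f (setc x j t) = ennreal (p t x) * g (setc x j t)"
      by (auto elim!: eventually_mono simp: indicator_def split: if_splits)
    then show ?case unfolding cond_nn_integral_def by (rule nn_integral_cong_AE)
  qed
qed

lemma AE_cond_density_pos: "AE x in M. 0 < p (x $ j) x"
proof (rule AE_I')
  let ?N = "{x. p (x $ j) x = 0}"
  have N: "?N \<in> sets borel"
    using measurable_cond_density[OF cond_density, of "\<lambda>x. x $ j" borel "\<lambda>x. x"] by measurable
  have "(\<lambda>t. ennreal (p t x) * indicator ?N (setc x j t)) = (\<lambda>_. 0)" for x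
    by (simp add: fun_eq_iff is_cond_density_setc[OF cond_density] split: split_indicator)
  then have "cond_nn_integral j \<mu> p (indicator ?N) x = 0" for x
    unfolding cond_nn_integral_def by simp
  then show "?N \<in> null_sets M"
    using emeasure_eq_nn_integral_cond[OF N] N sets_M by (simp add: null_sets_def)
  show "{x \<in> space M. \<not> 0 < p (x $ j) x} \<subseteq> ?N"
    using is_cond_density_nonneg[OF cond_density] by (auto simp: less_le)
qed

end

locale tilting = cond_law M j \<mu> p
  for M :: "(real^'p) measure" and j \<mu> p +
  fixes q :: "real \<Rightarrow> real^'p \<Rightarrow> real"
  assumes cond_density_q: "is_cond_density j \<mu> q"
    and same_support: "\<And>t x. 0 < p t x \<longleftrightarrow> 0 < q t x"
begin

definition tilt :: "real^'p \<Rightarrow> real" where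
  "tilt x = q (x $ j) x / p (x $ j) x"

definition tilted :: "(real^'p) measure" where
  "tilted = density M (\<lambda>x. ennreal (tilt x))"

lemma measurable_tilt [measurable]: "tilt \<in> borel_measurable borel"
  unfolding tilt_def
  using measurable_cond_density[OF cond_density, of "\<lambda>x. x $ j" borel "\<lambda>x. x"]
    measurable_cond_density[OF cond_density_q, of "\<lambda>x. x $ j" borel "\<lambda>x. x"]
  by measurable

lemma tilt_nonneg: "0 \<le> tilt x"
  unfolding tilt_def
  using is_cond_density_nonneg[OF cond_density] is_cond_density_nonneg[OF cond_density_q] by simp

lemma cond_nn_integral_tilt:
  "cond_nn_integral j \<mu> p (\<lambda>x. ennreal (tilt x) * f x) x = cond_nn_integral j \<mu> q f x"
  unfolding cond_nn_integral_def
proof (intro nn_integral_cong)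
  fix t
  have "0 \<le> p t x" "0 \<le> q t x" "p t x = 0 \<longleftrightarrow> q t x = 0"
    using is_cond_density_nonneg[OF cond_density, of t x] is_cond_density_nonneg[OF cond_density_q, of t x]
      same_support[of t x] by auto
  then show "ennreal (p t x) * (ennreal (tilt (setc x j t)) * f (setc x j t)) = ennreal (q t x) * f (setc x j t)"
    unfolding tilt_def
    by (cases "p t x = 0") (simp_all add: is_cond_density_setc[OF cond_density]
        is_cond_density_setc[OF cond_density_q] ennreal_mult'[symmetric] mult.assoc[symmetric])
qed

lemma sets_tilted: "sets tilted = sets borel"
  unfolding tilted_def using sets_M by simp

lemma prob_space_tilted: "prob_space tilted"
proof
  have "(\<integral>\<^sup>+x. ennreal (tilt x) \<partial>M) = (\<integral>\<^sup>+x. 1 \<partial>M)"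
    using cond_nn_integral_tilt[of "\<lambda>_. 1"] is_cond_density_nn_integral[OF cond_density_q]
    by (intro nn_integral_eq_if_AE_cond) (auto simp: cond_nn_integral_def)
  then show "emeasure tilted (space tilted) = 1"
    unfolding tilted_def using space_M sets_M emeasure_space_1
    by (subst emeasure_density) (auto simp: measurable_M_iff)
qed

lemma AE_tilted: "AE x in M. P x \<Longrightarrow> AE x in tilted. P x"
  unfolding tilted_def by (subst AE_density) (auto simp: measurable_M_iff elim: eventually_mono)

lemma has_cond_density_tilted: "has_cond_density tilted j \<mu> q"
  unfolding has_cond_density_def
proof (intro conjI cond_density_q ballI)
  fix A :: "(real^'p) set" assume A: "A \<in> sets borel"
  let ?G = "cond_nn_integral j \<mu> q (indicator A)"
  obtain g where g: "g \<in> borel_measurable borel"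
      "AE x in M. cond_nn_integral j \<mu> p (\<lambda>x. ennreal (tilt x) * indicator A x) x = g x"
      "integral\<^sup>N M g = (\<integral>\<^sup>+x. ennreal (tilt x) * indicator A x \<partial>M)"
    using tower_property_borel[of "\<lambda>x. ennreal (tilt x) * indicator A x"] A
    unfolding tower_property_def by auto
  have G_g: "AE x in M. ?G x = g x"
    using g(2) by (simp add: cond_nn_integral_tilt)
  have "AE x in M. cond_nn_integral j \<mu> p (\<lambda>x. ennreal (tilt x) * g x) x = ?G x"
  proof -
    have "AE x in M. cond_nn_integral j \<mu> p (\<lambda>x. ennreal (tilt x) * g x) x
        = cond_nn_integral j \<mu> p (\<lambda>x. ennreal (tilt x) * ?G x) x"
      using G_g by (intro cond_nn_integral_AE_cong) (auto elim: eventually_mono)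
    moreover have "cond_nn_integral j \<mu> p (\<lambda>x. ennreal (tilt x) * ?G x) x = ?G x" for x
      unfolding cond_nn_integral_tilt
      by (intro cond_nn_integral_invariant[OF ref cond_density_q] cond_nn_integral_setc[OF cond_density_q])
    ultimately show ?thesis by simp
  qed
  with G_g have "AE x in M. cond_nn_integral j \<mu> p (\<lambda>x. ennreal (tilt x) * g x) x = g x"
    by eventually_elim simp
  then have "(\<integral>\<^sup>+x. ennreal (tilt x) * g x \<partial>M) = integral\<^sup>N M g"
    using g(1) by (intro nn_integral_eq_if_AE_cond) auto
  moreover have "emeasure tilted A = integral\<^sup>N M g"
    unfolding tilted_def using g(3) A sets_M by (subst emeasure_density) (auto simp: measurable_M_iff)
  moreover have "(\<integral>\<^sup>+x. ?G x \<partial>tilted) = (\<integral>\<^sup>+x. ennreal (tilt x) * g x \<partial>M)"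
    using nn_integral_cong_AE[OF AE_tilted[OF G_g]] g(1)
    unfolding tilted_def by (subst (asm) nn_integral_density) (auto simp: measurable_M_iff)
  ultimately show "emeasure tilted A = (\<integral>\<^sup>+x. (\<integral>\<^sup>+t. ennreal (q t x) * indicator A (setc x j t) \<partial>\<mu>) \<partial>tilted)"
    unfolding cond_nn_integral_def by simp
qed

end

lemma sets_kernel: "K \<in> borel \<rightarrow>\<^sub>M prob_algebra borel \<Longrightarrow> sets (K x) = sets borel"
  using measurable_space[of K borel "prob_algebra borel" x] by (simp add: space_prob_algebra)

lemma prob_space_kernel: "K \<in> borel \<rightarrow>\<^sub>M prob_algebra borel \<Longrightarrow> prob_space (K x)"
  using measurable_space[of K borel "prob_algebra borel" x] by (simp add: space_prob_algebra)

lemma measurable_pair_kernel: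
  fixes K :: "real^'p \<Rightarrow> (real^'p) measure"
  assumes "K \<in> borel \<rightarrow>\<^sub>M prob_algebra borel"
  shows "(\<lambda>x. K x \<bind> (\<lambda>y. return (borel \<Otimes>\<^sub>M borel) (x, y))) \<in> borel \<rightarrow>\<^sub>M prob_algebra (borel \<Otimes>\<^sub>M borel)"
proof (rule measurable_bind_prob_space2[OF assms])
  have "(\<lambda>z. z) \<in> (borel::(real^'p) measure) \<Otimes>\<^sub>M (borel::(real^'p) measure) \<rightarrow>\<^sub>M borel \<Otimes>\<^sub>M borel" by simp
  from measurable_compose[OF this measurable_return_prob_space]
  show "(\<lambda>(x, y). return (borel \<Otimes>\<^sub>M borel) (x, y)) \<in> (borel::(real^'p) measure) \<Otimes>\<^sub>M borel \<rightarrow>\<^sub>M prob_algebra (borel \<Otimes>\<^sub>M borel)"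
    by (simp add: case_prod_beta')
qed

context
  fixes K :: "real^'p \<Rightarrow> (real^'p) measure" and M :: "(real^'p) measure"
  assumes K: "K \<in> borel \<rightarrow>\<^sub>M prob_algebra borel"
    and M: "prob_space M" "sets M = sets borel"
begin

lemma M_in_prob_algebra: "M \<in> space (prob_algebra borel)"
  using M by (simp add: space_prob_algebra)

lemma sets_joint: "sets (joint M K) = sets (borel \<Otimes>\<^sub>M borel)"
  unfolding joint_def using sets_bind'[OF M_in_prob_algebra measurable_pair_kernel[OF K]] .

lemma prob_space_joint: "prob_space (joint M K)"
  unfolding joint_def using prob_space_bind'[OF M_in_prob_algebra measurable_pair_kernel[OF K]] .

lemma nn_integral_joint:
  assumes f: "f \<in> borel_measurable (borel \<Otimes>\<^sub>M borel)"
  shows "(\<integral>\<^sup>+z. f z \<partial>joint M K) = (\<integral>\<^sup>+x. (\<integral>\<^sup>+y. f (x, y) \<partial>K x) \<partial>M)"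
proof -
  have "(\<lambda>x. K x \<bind> (\<lambda>y. return (borel \<Otimes>\<^sub>M borel) (x, y))) \<in> M \<rightarrow>\<^sub>M subprob_algebra (borel \<Otimes>\<^sub>M borel)"
    using measurable_prob_algebraD[OF measurable_pair_kernel[OF K]] by (simp add: measurable_cong_sets[OF M(2) refl])
  then have "(\<integral>\<^sup>+z. f z \<partial>joint M K) = (\<integral>\<^sup>+x. (\<integral>\<^sup>+z. f z \<partial>K x \<bind> (\<lambda>y. return (borel \<Otimes>\<^sub>M borel) (x, y))) \<partial>M)"
    unfolding joint_def by (rule nn_integral_bind[OF f])
  also have "\<dots> = (\<integral>\<^sup>+x. (\<integral>\<^sup>+y. f (x, y) \<partial>K x) \<partial>M)"
  proof (intro nn_integral_cong)
    fix x
    have "(\<lambda>y. return (borel \<Otimes>\<^sub>M borel) (x, y)) \<in> K x \<rightarrow>\<^sub>M subprob_algebra (borel \<Otimes>\<^sub>M borel)"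
      using measurable_compose[OF measurable_Pair1'[of x borel borel] return_measurable]
      by (simp add: measurable_cong_sets[OF sets_kernel[OF K] refl])
    then have "(\<integral>\<^sup>+z. f z \<partial>K x \<bind> (\<lambda>y. return (borel \<Otimes>\<^sub>M borel) (x, y)))
        = (\<integral>\<^sup>+y. (\<integral>\<^sup>+z. f z \<partial>return (borel \<Otimes>\<^sub>M borel) (x, y)) \<partial>K x)"
      by (rule nn_integral_bind[OF f])
    also have "\<dots> = (\<integral>\<^sup>+y. f (x, y) \<partial>K x)"
      using f by (intro nn_integral_cong nn_integral_return) (simp_all add: space_pair_measure)
    finally show "(\<integral>\<^sup>+z. f z \<partial>K x \<bind> (\<lambda>y. return (borel \<Otimes>\<^sub>M borel) (x, y))) = (\<integral>\<^sup>+y. f (x, y) \<partial>K x)" .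
  qed
  finally show ?thesis .
qed

lemma AE_joint_fst:
  assumes "AE x in M. P x"
  shows "AE z in joint M K. P (fst z)"
proof -
  obtain N where N: "{x \<in> space M. \<not> P x} \<subseteq> N" "N \<in> null_sets M"
    using assms by (auto elim!: AE_E)
  have N_borel: "N \<times> UNIV \<in> sets ((borel::(real^'p) measure) \<Otimes>\<^sub>M (borel::(real^'p) measure))"
    using N(2) M(2) by (metis null_setsD2 pair_measureI sets.top space_borel)
  have "emeasure (joint M K) (N \<times> UNIV) = (\<integral>\<^sup>+x. (\<integral>\<^sup>+y. indicator (N \<times> UNIV) (x, y) \<partial>K x) \<partial>M)"
    using N_borel nn_integral_joint[of "indicator (N \<times> UNIV)"] sets_joint by simp
  also have "\<dots> = (\<integral>\<^sup>+x. indicator N x \<partial>M)"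
    using prob_space.emeasure_space_1[OF prob_space_kernel[OF K]]
    by (intro nn_integral_cong) (simp split: split_indicator)
  also have "\<dots> = 0" using N(2) by (auto simp: null_sets_def)
  finally have "N \<times> UNIV \<in> null_sets (joint M K)"
    using N_borel sets_joint by (simp add: null_sets_def)
  moreover have "{z \<in> space (joint M K). \<not> P (fst z)} \<subseteq> N \<times> UNIV"
    using N(1) sets_eq_imp_space_eq[OF M(2)] by auto
  ultimately show ?thesis by (rule AE_I')
qed


end

lemma joint_density:
  fixes K :: "real^'p \<Rightarrow> (real^'p) measure"
  assumes K: "K \<in> borel \<rightarrow>\<^sub>M prob_algebra borel"
    and M: "prob_space M" "sets M = sets borel"
    and f: "f \<in> borel_measurable borel" and "prob_space (density M f)"
  shows "joint (density M f) K = density (joint M K) (\<lambda>z. f (fst z))"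
proof (rule measure_eqI)
  have sets_density: "sets (density M f) = sets borel" using M(2) by simp
  show "sets (joint (density M f) K) = sets (density (joint M K) (\<lambda>z. f (fst z)))"
    using sets_joint[OF K M] sets_joint[OF K assms(5) sets_density] by simp
  fix A assume "A \<in> sets (joint (density M f) K)"
  then have A: "A \<in> sets (borel \<Otimes>\<^sub>M borel)"
    using sets_joint[OF K assms(5) sets_density] by simp
  have "emeasure (joint (density M f) K) A = (\<integral>\<^sup>+x. (\<integral>\<^sup>+y. indicator A (x, y) \<partial>K x) \<partial>density M f)"
    using nn_integral_joint[OF K assms(5) sets_density, of "indicator A"] A
      sets_joint[OF K assms(5) sets_density] by simp
  also have "\<dots> = (\<integral>\<^sup>+x. f x * (\<integral>\<^sup>+y. indicator A (x, y) \<partial>K x) \<partial>M)"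
    using A f nn_integral_measurable_subprob_algebra2[OF _ measurable_prob_algebraD[OF K], of "\<lambda>x y. indicator A (x, y)"]
    by (subst nn_integral_density) (auto simp: measurable_cong_sets[OF M(2) refl])
  also have "\<dots> = (\<integral>\<^sup>+x. (\<integral>\<^sup>+y. f x * indicator A (x, y) \<partial>K x) \<partial>M)"
    using A by (intro nn_integral_cong nn_integral_cmult[symmetric])
      (simp add: measurable_cong_sets[OF sets_kernel[OF K] refl])
  also have "\<dots> = emeasure (density (joint M K) (\<lambda>z. f (fst z))) A"
    using A f sets_joint[OF K M] nn_integral_joint[OF K M, of "\<lambda>z. f (fst z) * indicator A z"]
    by (subst emeasure_density) (auto simp: measurable_cong_sets[OF sets_joint[OF K M] refl])
  finally show "emeasure (joint (density M f) K) A = emeasure (density (joint M K) (\<lambda>z. f (fst z))) A" .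
qed

text \<open>Equivalently tanh (v / 2) \<le> v / 2.\<close>
lemma exp_minus_one_le:
  fixes v :: real
  assumes "0 \<le> v"
  shows "exp v - 1 \<le> (exp v + 1) * v / 2"
proof -
  define F where "F x = (exp x + 1) * x / 2 - exp x + 1" for x :: real
  have "F 0 \<le> F v"
  proof (rule DERIV_nonneg_imp_increasing_open[OF assms])
    fix x :: real
    have "1 - x \<le> exp (-x)" using exp_ge_add_one_self[of "-x"] by simp
    then have "(1 - x) * exp x \<le> exp (-x) * exp x" by (intro mult_right_mono) auto
    then have "0 \<le> (exp x * x + (exp x + 1)) / 2 - exp x" by (simp add: exp_minus field_simps)
    moreover have "DERIV F x :> ((exp x * x + (exp x + 1)) / 2 - exp x)"
      unfolding F_def by (auto intro!: derivative_eq_intros)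
    ultimately show "\<exists>y. DERIV F x :> y \<and> 0 \<le> y" by blast
  next
    show "continuous_on {0..v} F" unfolding F_def by (intro continuous_intros) auto
  qed
  then show ?thesis unfolding F_def by simp
qed

lemma exp_minus_one_mult_le:
  fixes u :: real
  shows "(exp u - 1) * u \<le> (exp u + 1) * u\<^sup>2 / 2"
proof (cases "0 \<le> u")
  case True
  then show ?thesis
    using mult_right_mono[OF exp_minus_one_le[OF True] True] by (simp add: power2_eq_square)
next
  case False
  then have "exp (-u) - 1 \<le> (exp (-u) + 1) * (-u) / 2" by (intro exp_minus_one_le) simp
  then have "(exp (-u) - 1) * exp u \<le> ((exp (-u) + 1) * (-u) / 2) * exp u" by (intro mult_right_mono) auto
  then have "1 - exp u \<le> (1 + exp u) * (-u) / 2" by (simp add: algebra_simps mult_exp_exp)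
  then have "((1 + exp u) * (-u) / 2) * u \<le> (1 - exp u) * u"
    using False by (intro mult_right_mono_neg) auto
  moreover have "(exp u - 1) * u = - ((1 - exp u) * u)"
    and "(exp u + 1) * u\<^sup>2 / 2 = - (((1 + exp u) * (-u) / 2) * u)"
    by (simp add: algebra_simps) (simp add: field_simps power2_eq_square)
  ultimately show ?thesis by linarith
qed

lemma diff_mult_ln_div_le:
  fixes a b \<delta> :: real
  assumes "0 < a" "0 < b" "\<bar>ln (a / b)\<bar> \<le> \<delta>"
  shows "(a - b) * ln (a / b) \<le> (a + b) * \<delta>\<^sup>2 / 2"
proof -
  define u where "u = ln (a / b)"
  have a: "a = b * exp u" unfolding u_def using assms by simp
  have "u\<^sup>2 \<le> \<delta>\<^sup>2" using power_mono[OF assms(3) abs_ge_zero, of 2] unfolding u_def by simp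
  have "(a - b) * u = b * ((exp u - 1) * u)" unfolding a by (simp add: algebra_simps)
  also have "\<dots> \<le> b * ((exp u + 1) * u\<^sup>2 / 2)"
    using assms(2) by (intro mult_left_mono exp_minus_one_mult_le) auto
  also have "\<dots> \<le> b * ((exp u + 1) * \<delta>\<^sup>2 / 2)"
    using assms(2) \<open>u\<^sup>2 \<le> \<delta>\<^sup>2\<close> by (intro mult_left_mono divide_right_mono) (auto simp: add_pos_pos)
  also have "\<dots> = (a + b) * \<delta>\<^sup>2 / 2" unfolding a by (simp add: algebra_simps)
  finally show ?thesis unfolding u_def .
qed

text \<open>For a law invariant under an involution s, E[a ln (a / a\<circ>s)] = E[(a - a\<circ>s) ln (a / a\<circ>s)] / 2,
  and the integrand on the right is at most (a + a\<circ>s) \<delta>^2 / 2.\<close>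
lemma integral_mult_ln_ratio_le:
  fixes s :: "'a \<Rightarrow> 'a" and a :: "'a \<Rightarrow> real"
  assumes s: "s \<in> J \<rightarrow>\<^sub>M N" "distr J N s = J" "\<And>z. s (s z) = z"
    and a: "integrable J a" "integral\<^sup>L J a = 1"
    and bound: "AE z in J. 0 < a z \<and> 0 < a (s z) \<and> \<bar>ln (a z / a (s z))\<bar> \<le> \<delta>"
  shows "(\<integral>z. a z * ln (a z / a (s z)) \<partial>J) \<le> \<delta>\<^sup>2 / 2"
proof -
  define h where "h z = ln (a z / a (s z))" for z
  have sets_N: "sets N = sets J" using s(2) by (metis sets_distr)
  have a_N: "a \<in> borel_measurable N"
    using borel_measurable_integrable[OF a(1)] by (simp add: measurable_cong_sets[OF sets_N refl])
  have swap: "integral\<^sup>L J (\<lambda>z. f (s z)) = integral\<^sup>L J f" if "f \<in> borel_measurable J" for f :: "'a \<Rightarrow> real"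
    using integral_distr[OF s(1), of f] that s(2) by (simp add: measurable_cong_sets[OF sets_N refl])
  have [measurable]: "a \<in> borel_measurable J" "(\<lambda>z. a (s z)) \<in> borel_measurable J" "h \<in> borel_measurable J"
    using borel_measurable_integrable[OF a(1)] measurable_compose[OF s(1) a_N] unfolding h_def by measurable
  have b: "integrable J (\<lambda>z. a (s z))" "integral\<^sup>L J (\<lambda>z. a (s z)) = 1"
    using integrable_distr_eq[OF s(1) a_N] a s(2) swap by auto
  have integrable_h: "integrable J (\<lambda>z. c z * h z)"
    if "integrable J c" "c \<in> borel_measurable J" "AE z in J. 0 \<le> c z \<and> \<bar>h z\<bar> \<le> \<delta>" for c
  proof (rule Bochner_Integration.integrable_bound[OF integrable_mult_right[OF that(1), of \<delta>]])
    show "AE z in J. norm (c z * h z) \<le> norm (\<delta> * c z)"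
      using that(3)
    proof eventually_elim
      case (elim z)
      then have "c z * \<bar>h z\<bar> \<le> c z * \<bar>\<delta>\<bar>"
        by (intro mult_left_mono) auto
      then show ?case using elim by (simp add: abs_mult mult.commute)
    qed
  qed (use that in measurable)
  have ah: "integrable J (\<lambda>z. a z * h z)"
    by (intro integrable_h a(1) eventually_mono[OF bound]) (auto simp: h_def)
  have bh: "integrable J (\<lambda>z. a (s z) * h z)"
    by (intro integrable_h b(1) eventually_mono[OF bound]) (auto simp: h_def)
  have "integral\<^sup>L J (\<lambda>z. a z * h z) = integral\<^sup>L J (\<lambda>z. a (s z) * h (s z))"
    by (rule swap[symmetric]) measurable
  also have "\<dots> = integral\<^sup>L J (\<lambda>z. - (a (s z) * h z))"
    by (intro integral_cong_AE eventually_mono[OF bound]) (auto simp: h_def s(3) ln_div algebra_simps)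
  finally have "2 * integral\<^sup>L J (\<lambda>z. a z * h z) = integral\<^sup>L J (\<lambda>z. (a z - a (s z)) * h z)"
    using ah bh by (simp add: left_diff_distrib)
  also have "\<dots> \<le> integral\<^sup>L J (\<lambda>z. (a z + a (s z)) * \<delta>\<^sup>2 / 2)"
  proof (rule integral_mono_AE)
    show "AE z in J. (a z - a (s z)) * h z \<le> (a z + a (s z)) * \<delta>\<^sup>2 / 2"
      using bound by eventually_elim (unfold h_def, blast intro: diff_mult_ln_div_le)
  qed (use ah bh a(1) b(1) in \<open>auto simp: left_diff_distrib distrib_right\<close>)
  also have "\<dots> = \<delta>\<^sup>2" using a b by simp
  finally show ?thesis unfolding h_def by simp
qed

locale knockoff = tilting M j \<mu> p q
  for M :: "(real^'p) measure" and j \<mu> p q +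
  fixes K :: "real^'p \<Rightarrow> (real^'p) measure" and \<delta> :: real
  assumes kernel: "K \<in> borel \<rightarrow>\<^sub>M prob_algebra borel"
    and exch: "pairwise_exch K j \<mu> q"
    and log_ratio_le: "\<And>t t' x. ln ((p t x * q t' x) / (q t x * p t' x)) \<le> \<delta>"
    and delta_nonneg: "0 \<le> \<delta>"
begin

abbreviation law :: "((real^'p) \<times> (real^'p)) measure" where
  "law \<equiv> joint M K"

abbreviation tilted_law :: "((real^'p) \<times> (real^'p)) measure" where
  "tilted_law \<equiv> joint tilted K"

lemma sets_law: "sets law = sets (borel \<Otimes>\<^sub>M borel)"
  by (rule sets_joint[OF kernel prob_space_axioms sets_M])

lemma prob_space_law: "prob_space law"
  by (rule prob_space_joint[OF kernel prob_space_axioms sets_M])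

lemma sets_tilted_law: "sets tilted_law = sets (borel \<Otimes>\<^sub>M borel)"
  by (rule sets_joint[OF kernel prob_space_tilted sets_tilted])

lemma tilted_law_eq_density: "tilted_law = density law (\<lambda>z. ennreal (tilt (fst z)))"
  unfolding tilted_def
  by (rule joint_density[OF kernel prob_space_axioms sets_M])
     (use prob_space_tilted[unfolded tilted_def] in auto)

lemma distr_swapj_tilted_law: "distr tilted_law (borel \<Otimes>\<^sub>M borel) (swapj j) = tilted_law"
  using exch prob_space_tilted sets_tilted has_cond_density_tilted unfolding pairwise_exch_def by blast

lemma measurable_law_iff: "f \<in> law \<rightarrow>\<^sub>M N \<longleftrightarrow> f \<in> borel \<Otimes>\<^sub>M borel \<rightarrow>\<^sub>M N"
  by (simp add: measurable_cong_sets[OF sets_law refl])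

lemma measurable_tilted_law_iff: "f \<in> tilted_law \<rightarrow>\<^sub>M N \<longleftrightarrow> f \<in> borel \<Otimes>\<^sub>M borel \<rightarrow>\<^sub>M N"
  by (simp add: measurable_cong_sets[OF sets_tilted_law refl])

definition in_support :: "(real^'p) \<times> (real^'p) \<Rightarrow> bool" where
  "in_support z \<longleftrightarrow> 0 < p (fst z $ j) (fst z) \<and> 0 < p (snd z $ j) (fst z)"

definition pq_ratio :: "(real^'p) \<times> (real^'p) \<Rightarrow> real" where
  "pq_ratio z = p (fst z $ j) (fst z) / q (fst z $ j) (fst z)"

definition log_ratio :: "(real^'p) \<times> (real^'p) \<Rightarrow> real" where
  "log_ratio z = ln ((p (fst z $ j) (fst z) * q (snd z $ j) (fst z)) /
                     (q (fst z $ j) (fst z) * p (snd z $ j) (fst z)))"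

lemma KLhat_eq_sum_log_ratio: "KLhat n j p q \<omega> = (\<Sum>i<n. log_ratio (\<omega> i))"
  unfolding KLhat_def log_ratio_def ..

lemma measurable_pq_ratio [measurable]: "pq_ratio \<in> borel_measurable (borel \<Otimes>\<^sub>M borel)"
  and measurable_log_ratio [measurable]: "log_ratio \<in> borel_measurable (borel \<Otimes>\<^sub>M borel)"
proof -
  have fst: "(\<lambda>z. fst z $ j) \<in> borel_measurable ((borel :: (real^'p) measure) \<Otimes>\<^sub>M (borel :: (real^'p) measure))"
    and snd: "(\<lambda>z. snd z $ j) \<in> borel_measurable ((borel :: (real^'p) measure) \<Otimes>\<^sub>M (borel :: (real^'p) measure))"
    by measurable
  note [measurable] = measurable_cond_density[OF cond_density fst measurable_fst]
    measurable_cond_density[OF cond_density_q fst measurable_fst]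
    measurable_cond_density[OF cond_density snd measurable_fst]
    measurable_cond_density[OF cond_density_q snd measurable_fst]
  show "pq_ratio \<in> borel_measurable (borel \<Otimes>\<^sub>M borel)" unfolding pq_ratio_def by measurable
  show "log_ratio \<in> borel_measurable (borel \<Otimes>\<^sub>M borel)" unfolding log_ratio_def by measurable
qed

lemma pq_ratio_swapj: "pq_ratio (swapj j z) = p (snd z $ j) (fst z) / q (snd z $ j) (fst z)"
  unfolding pq_ratio_def swapj_def
  by (simp add: is_cond_density_setc[OF cond_density] is_cond_density_setc[OF cond_density_q])

lemma in_support_swapj: "in_support (swapj j z) \<longleftrightarrow> in_support z"
  unfolding in_support_def swapj_def by (auto simp: is_cond_density_setc[OF cond_density])

lemma
  assumes "in_support z"
  shows pq_ratio_pos: "0 < pq_ratio z"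
    and log_ratio_eq_ln_pq_ratio: "log_ratio z = ln (pq_ratio z / pq_ratio (swapj j z))"
proof -
  have "0 < q (fst z $ j) (fst z)" "0 < q (snd z $ j) (fst z)"
    using assms same_support unfolding in_support_def by auto
  then show "0 < pq_ratio z" "log_ratio z = ln (pq_ratio z / pq_ratio (swapj j z))"
    using assms unfolding in_support_def log_ratio_def pq_ratio_swapj by (simp_all add: pq_ratio_def field_simps)
qed

lemma abs_log_ratio_le:
  assumes "in_support z"
  shows "\<bar>log_ratio z\<bar> \<le> \<delta>"
proof -
  have "log_ratio (swapj j z) = - log_ratio z"
    using assms in_support_swapj[of z] pq_ratio_pos[of z] pq_ratio_pos[of "swapj j z"]
    by (simp add: log_ratio_eq_ln_pq_ratio ln_div)
  moreover have "log_ratio z \<le> \<delta>" "log_ratio (swapj j z) \<le> \<delta>"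
    unfolding log_ratio_def by (rule log_ratio_le)+
  ultimately show ?thesis by linarith
qed

lemma AE_tilted_law_in_support: "AE z in tilted_law. in_support z"
proof -
  have fst_pos: "AE z in tilted_law. 0 < p (fst z $ j) (fst z)"
    by (intro AE_joint_fst[OF kernel prob_space_tilted sets_tilted] AE_tilted AE_cond_density_pos)
  then have "AE z in distr tilted_law (borel \<Otimes>\<^sub>M borel) (swapj j). 0 < p (fst z $ j) (fst z)"
    unfolding distr_swapj_tilted_law .
  then have "AE z in tilted_law. 0 < p (fst (swapj j z) $ j) (fst (swapj j z))"
    by (rule AE_distrD[rotated]) (simp add: measurable_tilted_law_iff)
  with fst_pos show ?thesis
    unfolding in_support_def swapj_def by eventually_elim (simp add: is_cond_density_setc[OF cond_density])
qed

lemma tilt_mult_pq_ratio: "0 < p (fst z $ j) (fst z) \<Longrightarrow> tilt (fst z) * pq_ratio z = 1"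
  using same_support unfolding tilt_def pq_ratio_def by (simp add: less_imp_neq[symmetric])

lemma AE_law_fst_pos: "AE z in law. 0 < p (fst z $ j) (fst z)"
  by (rule AE_joint_fst[OF kernel prob_space_axioms sets_M AE_cond_density_pos])

lemma AE_law_in_support: "AE z in law. in_support z"
proof -
  have "AE z in law. 0 < tilt (fst z) \<longrightarrow> in_support z"
    using AE_tilted_law_in_support unfolding tilted_law_eq_density
    by (subst (asm) AE_density) (auto simp: measurable_law_iff)
  with AE_law_fst_pos show ?thesis
  proof eventually_elim
    case (elim z)
    then have "tilt (fst z) * pq_ratio z = 1" using tilt_mult_pq_ratio by blast
    with elim tilt_nonneg[of "fst z"] show ?case by (metis less_eq_real_def mult_zero_left zero_neq_one)
  qed
qed

lemma integrable_pq_ratio: "integrable tilted_law pq_ratio"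
  and integral_pq_ratio: "integral\<^sup>L tilted_law pq_ratio = 1"
proof -
  have nonneg: "0 \<le> pq_ratio z" for z
    unfolding pq_ratio_def
    using is_cond_density_nonneg[OF cond_density] is_cond_density_nonneg[OF cond_density_q] by simp
  have "(\<integral>\<^sup>+z. ennreal (pq_ratio z) \<partial>tilted_law) = (\<integral>\<^sup>+z. ennreal (tilt (fst z)) * ennreal (pq_ratio z) \<partial>law)"
    unfolding tilted_law_eq_density by (subst nn_integral_density) (auto simp: measurable_law_iff)
  also have "\<dots> = (\<integral>\<^sup>+z. 1 \<partial>law)"
    by (intro nn_integral_cong_AE eventually_mono[OF AE_law_fst_pos])
      (simp add: tilt_mult_pq_ratio ennreal_mult'[symmetric] tilt_nonneg)
  also have "\<dots> = 1" using prob_space.emeasure_space_1[OF prob_space_law] by simp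
  finally have nn: "(\<integral>\<^sup>+z. ennreal (pq_ratio z) \<partial>tilted_law) = 1" .
  show "integrable tilted_law pq_ratio"
    using nn nonneg by (intro integrableI_nonneg) (auto simp: measurable_tilted_law_iff)
  show "integral\<^sup>L tilted_law pq_ratio = 1"
    using nn nonneg by (subst integral_eq_nn_integral) (auto simp: measurable_tilted_law_iff)
qed

lemma integral_log_ratio_le: "integral\<^sup>L law log_ratio \<le> \<delta>\<^sup>2 / 2"
proof -
  have "integral\<^sup>L law log_ratio = (\<integral>z. tilt (fst z) * (pq_ratio z * log_ratio z) \<partial>law)"
    by (intro integral_cong_AE eventually_mono[OF AE_law_fst_pos])
      (simp_all add: measurable_law_iff tilt_mult_pq_ratio mult.assoc[symmetric])
  also have "\<dots> = (\<integral>z. pq_ratio z * log_ratio z \<partial>tilted_law)"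
    unfolding tilted_law_eq_density
    by (subst integral_density) (auto simp: measurable_law_iff tilt_nonneg)
  also have "\<dots> = (\<integral>z. pq_ratio z * ln (pq_ratio z / pq_ratio (swapj j z)) \<partial>tilted_law)"
    by (intro integral_cong_AE eventually_mono[OF AE_tilted_law_in_support])
      (simp_all add: measurable_tilted_law_iff log_ratio_eq_ln_pq_ratio)
  also have "\<dots> \<le> \<delta>\<^sup>2 / 2"
  proof (rule integral_mult_ln_ratio_le[OF _ distr_swapj_tilted_law swapj_swapj integrable_pq_ratio integral_pq_ratio])
    show "swapj j \<in> tilted_law \<rightarrow>\<^sub>M borel \<Otimes>\<^sub>M borel" by (simp add: measurable_tilted_law_iff)
    show "AE z in tilted_law. 0 < pq_ratio z \<and> 0 < pq_ratio (swapj j z) \<and> \<bar>ln (pq_ratio z / pq_ratio (swapj j z))\<bar> \<le> \<delta>"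
      using AE_tilted_law_in_support
      by eventually_elim (simp add: pq_ratio_pos in_support_swapj abs_log_ratio_le flip: log_ratio_eq_ln_pq_ratio)
  qed
  finally show ?thesis .
qed

end

lemma indep_vars_PiM_components:
  assumes T: "prob_space T" and I: "finite I" "I \<noteq> {}"
  shows "prob_space.indep_vars (PiM I (\<lambda>_. T)) (\<lambda>_. T) (\<lambda>i \<omega>. \<omega> i) I"
proof -
  interpret prob_space "PiM I (\<lambda>_. T)" using prob_space_PiM[of I "\<lambda>_. T"] T by simp
  have "distr (PiM I (\<lambda>_. T)) (PiM I (\<lambda>_. T)) (\<lambda>x. \<lambda>i\<in>I. x i) = distr (PiM I (\<lambda>_. T)) (PiM I (\<lambda>_. T)) (\<lambda>x. x)"
    by (rule distr_cong) (auto simp: space_PiM PiE_def extensional_restrict)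
  also have "\<dots> = PiM I (\<lambda>i. distr (PiM I (\<lambda>_. T)) T (\<lambda>\<omega>. \<omega> i))"
    by (simp add: distr_PiM_component[of I "\<lambda>_. T", simplified] T cong: PiM_cong)
  finally show ?thesis
    by (subst indep_vars_iff_distr_eq_PiM'[OF I(2)]) (auto intro: measurable_component_singleton)
qed

lemma (in prob_space) prob_all_ge:
  assumes "finite I" and "\<And>i. i \<in> I \<Longrightarrow> {x \<in> space M. P i x} \<in> events"
    and "\<And>i. i \<in> I \<Longrightarrow> prob {x \<in> space M. \<not> P i x} \<le> c"
  shows "1 - real (card I) * c \<le> prob {x \<in> space M. \<forall>i\<in>I. P i x}"
proof -
  have events: "{x \<in> space M. \<not> P i x} \<in> events" if "i \<in> I" for i
    using sets.sets_Collect_neg[OF assms(2)[OF that]] .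
  have "prob (space M - {x \<in> space M. \<forall>i\<in>I. P i x}) = prob (\<Union>i\<in>I. {x \<in> space M. \<not> P i x})"
    by (rule arg_cong[of _ _ prob]) auto
  also have "\<dots> \<le> (\<Sum>i\<in>I. prob {x \<in> space M. \<not> P i x})"
    using assms(1) events by (intro finite_measure_subadditive_finite) auto
  also have "\<dots> \<le> real (card I) * c"
    using assms(3) sum_bounded_above[of I "\<lambda>i. prob {x \<in> space M. \<not> P i x}" c] by simp
  finally show ?thesis
    using prob_compl[of "{x \<in> space M. \<forall>i\<in>I. P i x}"] assms(1,2) by (simp add: sets.sets_Collect_finite_All)
qed

context knockoff
begin

abbreviation sample :: "nat \<Rightarrow> (nat \<Rightarrow> (real^'p) \<times> (real^'p)) measure" where
  "sample n \<equiv> \<Pi>\<^sub>M i\<in>{..<n}. law"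

lemma prob_space_sample: "prob_space (sample n)"
  using prob_space_PiM[of "{..<n}" "\<lambda>_. law"] prob_space_law by simp

lemma measurable_log_ratio_component:
  "i < n \<Longrightarrow> (\<lambda>\<omega>. log_ratio (\<omega> i)) \<in> borel_measurable (sample n)"
  by (rule measurable_compose[OF measurable_component_singleton]) (simp_all add: measurable_law_iff)

lemma measurable_KLhat: "KLhat n j p q \<in> borel_measurable (sample n)"
  unfolding KLhat_eq_sum_log_ratio[abs_def]
  by (intro borel_measurable_sum measurable_log_ratio_component) simp

lemma KLhat_le: "KLhat n j p q \<omega> \<le> real n * \<delta>"
  using sum_mono[of "{..<n}" "\<lambda>i. log_ratio (\<omega> i)" "\<lambda>_. \<delta>"] log_ratio_le
  unfolding KLhat_eq_sum_log_ratio log_ratio_def by simp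

lemma prob_KLhat_ge_le:
  assumes "0 < n" "0 < \<delta>" "0 \<le> \<epsilon>"
  shows "measure (sample n) {\<omega> \<in> space (sample n). real n * integral\<^sup>L law log_ratio + \<epsilon> \<le> KLhat n j p q \<omega>}
           \<le> exp (- \<epsilon>\<^sup>2 / (2 * real n * \<delta>\<^sup>2))"
proof -
  interpret S: prob_space "sample n" by (rule prob_space_sample)
  have expectation: "S.expectation (\<lambda>\<omega>. log_ratio (\<omega> i)) = integral\<^sup>L law log_ratio" if "i < n" for i
    using integral_distr[OF measurable_component_singleton[of i "{..<n}" "\<lambda>_. law"], of log_ratio]
      distr_PiM_component[of "{..<n}" "\<lambda>_. law" i] prob_space_law that
    by (simp add: measurable_law_iff)
  interpret H: Hoeffding_ineq "sample n" "{..<n}" "\<lambda>i \<omega>. log_ratio (\<omega> i)" "\<lambda>_. -\<delta>" "\<lambda>_. \<delta>"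
      "\<Sum>i\<in>{..<n}. S.expectation (\<lambda>\<omega>. log_ratio (\<omega> i))"
  proof (unfold_locales)
    have "S.indep_vars (\<lambda>_. law) (\<lambda>i \<omega>. \<omega> i) {..<n}"
      using indep_vars_PiM_components[OF prob_space_law, of "{..<n}"] assms(1) by auto
    then show "S.indep_vars (\<lambda>_. borel) (\<lambda>i \<omega>. log_ratio (\<omega> i)) {..<n}"
      by (rule S.indep_vars_compose2) (simp add: measurable_law_iff)
    show "AE \<omega> in sample n. log_ratio (\<omega> i) \<in> {-\<delta>..\<delta>}" if "i \<in> {..<n}" for i
      using that prob_space_law AE_law_in_support
      by (intro AE_PiM_component[where P = "\<lambda>z. log_ratio z \<in> {-\<delta>..\<delta>}"])
        (auto elim!: eventually_mono dest!: abs_log_ratio_le simp: abs_le_iff)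
  qed simp
  have "(\<Sum>i<n. (\<delta> - - \<delta>)\<^sup>2) = real n * (2 * \<delta>)\<^sup>2" "0 < real n * (2 * \<delta>)\<^sup>2"
    using assms by simp_all
  moreover have "-2 * \<epsilon>\<^sup>2 / (real n * (2 * \<delta>)\<^sup>2) = - \<epsilon>\<^sup>2 / (2 * real n * \<delta>\<^sup>2)"
    by (simp add: power2_eq_square field_simps)
  ultimately show ?thesis
    using H.Hoeffding_ineq_ge[OF assms(3)] by (simp add: expectation KLhat_eq_sum_log_ratio mult.assoc)
qed

lemma prob_KLhat_gt_le:
  assumes "1 \<le> c"
  shows "measure (sample n) {\<omega> \<in> space (sample n).
           real n * \<delta>\<^sup>2 / 2 + 2 * sqrt (real n * ln c) * \<delta> < KLhat n j p q \<omega>} \<le> 1 / c\<^sup>2"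
proof (cases "n = 0 \<or> \<delta> = 0")
  case True
  then have "\<not> real n * \<delta>\<^sup>2 / 2 + 2 * sqrt (real n * ln c) * \<delta> < KLhat n j p q \<omega>" for \<omega>
    using KLhat_le[of n \<omega>] by auto
  then show ?thesis by simp
next
  case False
  then have n: "0 < n" and \<delta>: "0 < \<delta>" using delta_nonneg by auto
  interpret S: prob_space "sample n" by (rule prob_space_sample)
  define \<epsilon> where "\<epsilon> = 2 * sqrt (real n * ln c) * \<delta>"
  have "0 \<le> ln c" using assms by simp
  then have "0 \<le> \<epsilon>" using \<delta> by (simp add: \<epsilon>_def)
  have "real n * integral\<^sup>L law log_ratio \<le> real n * \<delta>\<^sup>2 / 2"
    using mult_left_mono[OF integral_log_ratio_le, of "real n"] by simp
  then have "{\<omega> \<in> space (sample n). real n * \<delta>\<^sup>2 / 2 + \<epsilon> < KLhat n j p q \<omega>}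
      \<subseteq> {\<omega> \<in> space (sample n). real n * integral\<^sup>L law log_ratio + \<epsilon> \<le> KLhat n j p q \<omega>}"
    by auto
  then have "measure (sample n) {\<omega> \<in> space (sample n). real n * \<delta>\<^sup>2 / 2 + \<epsilon> < KLhat n j p q \<omega>}
      \<le> measure (sample n) {\<omega> \<in> space (sample n). real n * integral\<^sup>L law log_ratio + \<epsilon> \<le> KLhat n j p q \<omega>}"
    using measurable_KLhat by (intro S.finite_measure_mono) measurable
  also have "\<dots> \<le> exp (- \<epsilon>\<^sup>2 / (2 * real n * \<delta>\<^sup>2))"
    by (rule prob_KLhat_ge_le[OF n \<delta> \<open>0 \<le> \<epsilon>\<close>])
  also have "- \<epsilon>\<^sup>2 / (2 * real n * \<delta>\<^sup>2) = - (2 * ln c)"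
    using n \<delta> \<open>0 \<le> ln c\<close> by (simp add: \<epsilon>_def power_mult_distrib power2_eq_square)
  also have "exp (- (2 * ln c)) = 1 / c\<^sup>2"
    using assms by (simp add: exp_minus exp_of_nat_mult[of 2, simplified] inverse_eq_divide)
  finally show ?thesis unfolding \<epsilon>_def .
qed

end

theorem lemma2:
  fixes PX :: "(real^'p) measure"
    and \<mu> :: "'p \<Rightarrow> real measure"
    and P Q :: "'p \<Rightarrow> real \<Rightarrow> real^'p \<Rightarrow> real"
    and K :: "real^'p \<Rightarrow> (real^'p) measure"
    and n :: nat and \<delta> :: real
  assumes PX: "prob_space PX" "sets PX = sets borel"
    and ref: "\<And>j. ref_measure (\<mu> j)"
    and P_true: "\<And>j. has_cond_density PX j (\<mu> j) (P j)"
    and Q_dens: "\<And>j. is_cond_density j (\<mu> j) (Q j)"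
    and same_supp: "\<And>j t x. 0 < P j t x \<longleftrightarrow> 0 < Q j t x"
    and K_kernel: "K \<in> borel \<rightarrow>\<^sub>M prob_algebra borel"
    and exch: "\<And>j. pairwise_exch K j (\<mu> j) (Q j)"
    and \<delta>: "0 \<le> \<delta>"
    and bound: "\<And>j t t' x. ln ((P j t x * Q j t' x) / (Q j t x * P j t' x)) \<le> \<delta>"
  shows "measure (\<Pi>\<^sub>M i\<in>{..<n}. joint PX K)
           {\<omega> \<in> space (\<Pi>\<^sub>M i\<in>{..<n}. joint PX K).
              Max (range (\<lambda>j. KLhat n j (P j) (Q j) \<omega>))
                \<le> real n * \<delta>\<^sup>2 / 2 + 2 * sqrt (real n * ln (real CARD('p))) * \<delta>}
         \<ge> 1 - 1 / real CARD('p)"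
proof -
  define thr where "thr = real n * \<delta>\<^sup>2 / 2 + 2 * sqrt (real n * ln (real CARD('p))) * \<delta>"
  have knockoff: "knockoff PX j (\<mu> j) (P j) (Q j) K \<delta>" for j
    using assms by (simp add: knockoff_def knockoff_axioms_def tilting_def tilting_axioms_def
        cond_law_def cond_law_axioms_def)
  interpret S: prob_space "\<Pi>\<^sub>M i\<in>{..<n}. joint PX K"
    using knockoff.prob_space_sample[OF knockoff] .
  have "S.prob {\<omega> \<in> space (\<Pi>\<^sub>M i\<in>{..<n}. joint PX K). \<not> KLhat n j (P j) (Q j) \<omega> \<le> thr}
      \<le> 1 / (real CARD('p))\<^sup>2" for j
    using knockoff.prob_KLhat_gt_le[OF knockoff, where c = "real CARD('p)" and n = n] by (simp add: thr_def not_le)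
  moreover have "{\<omega> \<in> space (\<Pi>\<^sub>M i\<in>{..<n}. joint PX K). KLhat n j (P j) (Q j) \<omega> \<le> thr} \<in> S.events" for j
    using knockoff.measurable_KLhat[OF knockoff, where n = n] by measurable
  ultimately have "1 - real CARD('p) * (1 / (real CARD('p))\<^sup>2)
      \<le> S.prob {\<omega> \<in> space (\<Pi>\<^sub>M i\<in>{..<n}. joint PX K). \<forall>j\<in>UNIV. KLhat n j (P j) (Q j) \<omega> \<le> thr}"
    by (intro S.prob_all_ge) auto
  moreover have "real CARD('p) * (1 / (real CARD('p))\<^sup>2) = 1 / real CARD('p)"
    by (simp add: power2_eq_square)
  moreover have "(\<forall>j\<in>UNIV. KLhat n j (P j) (Q j) \<omega> \<le> thr) \<longleftrightarrow> Max (range (\<lambda>j. KLhat n j (P j) (Q j) \<omega>)) \<le> thr" for \<omega>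
    by (simp add: Max_le_iff)
  ultimately show ?thesis unfolding thr_def by simp
qed

end
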